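(* Let $G=\mathrm{SL}(3,\mathbb R)$, $P$ the upper triangular matrices in $G$, $\mathfrak n$ the strictly lower triangular $3\times3$ real matrices, and let $E_{ij}$ be the matrix units. For $X\in\mathfrak n$ consider the distinguished curve $t\mapsto\exp(tX)P$. Then this curve admits a projective reparameterisation for each of $X=E_{21}$, $X=E_{32}$, $X=E_{21}+E_{32}$, $X=E_{21}+E_{31}$, $X=E_{31}+E_{32}$, $X=E_{31}$, whereas for $X=E_{21}+xE_{31}+E_{32}$ with $x\neq0$ it admits only affine reparameterisations (its reparameterisations as a distinguished curve with origin at $eP$ are only $t\mapsto at$, $a\ne0$). In particular $t\mapsto\exp\big(t(E_{21}+E_{31}+E_{32})\big)P$ admits only affine reparameterisations.
   Context: A distinguished curve in $G/P$ is $t\mapsto q\exp(tY)P$ with $q\in P$, $0\ne Y\in\mathfrak n$. The curve $\gamma(t)=p\exp(tX)P$ admits a projective reparameterisation if there exist $q\in P$, $Y\in\mathfrak n$ with $p\exp(tX)P=q\exp(\tfrac{t}{t+1}Y)P$ for all $t$ near $0$; otherwise its only reparameterisations $\varphi$ with $\varphi(0)=0$ preserving distinguishedness are $t\mapsto at$. *)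

theory Defs
  imports "HOL-Analysis.Analysis"
begin

text \<open>3x3 real matrices are represented as real^3^3; rows/columns are indexed by the
numeral type 3 with elements 0 < 1 < 2 (paper index k corresponds to k-1).\<close>

type_synonym mat3 = "real^3^3"

definition E :: "nat \<Rightarrow> nat \<Rightarrow> mat3" where
  "E i j = (\<chi> r c. if r = of_nat (i - 1) \<and> c = of_nat (j - 1) then 1 else 0)"

definition mpow :: "mat3 \<Rightarrow> nat \<Rightarrow> mat3" where
  "mpow A k = (((**) A) ^^ k) (mat 1)"

definition mexp :: "mat3 \<Rightarrow> mat3" where
  "mexp A = (\<Sum>k. (1 / fact k) *\<^sub>R mpow A k)"

definition SL3 :: "mat3 set" where
  "SL3 = {A. det A = 1}"

definition Pb :: "mat3 set" where
  "Pb = {A \<in> SL3. \<forall>i j. j < i \<longrightarrow> A $ i $ j = 0}"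

definition nlow :: "mat3 set" where
  "nlow = {X. \<forall>i j. i \<le> j \<longrightarrow> X $ i $ j = 0}"

definition cosetP :: "mat3 \<Rightarrow> mat3 set" where
  "cosetP g = (\<lambda>p. g ** p) ` Pb"

definition admits_proj_reparam :: "mat3 \<Rightarrow> mat3 \<Rightarrow> bool" where
  "admits_proj_reparam p X \<longleftrightarrow>
     (\<exists>q\<in>Pb. \<exists>Y\<in>nlow. \<forall>\<^sub>F t in nhds 0.
        cosetP (p ** mexp (t *\<^sub>R X)) = cosetP (q ** mexp ((t / (t + 1)) *\<^sub>R Y)))"

definition only_affine_reparams :: "mat3 \<Rightarrow> mat3 \<Rightarrow> bool" where
  "only_affine_reparams p X \<longleftrightarrow>
     (\<forall>\<phi> :: real \<Rightarrow> real. \<phi> 0 = 0 \<longrightarrow>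
        (\<exists>q\<in>Pb. \<exists>Y\<in>nlow. Y \<noteq> 0 \<and> (\<forall>\<^sub>F t in nhds 0.
            cosetP (p ** mexp (\<phi> t *\<^sub>R X)) = cosetP (q ** mexp (t *\<^sub>R Y))))
        \<longrightarrow> (\<exists>a. a \<noteq> 0 \<and> (\<forall>\<^sub>F t in nhds 0. \<phi> t = a * t)))"

end

theory Submission
  imports Defs "HOL-Computational_Algebra.Polynomial"
begin

(* The six positive cases are explicit factorisations exp(tX) = q exp((t/(t+1)) Y) p(t) with p(t)
   upper triangular.  For X = E21 + x E31 + E32 with x \<noteq> 0, the equation exp(\<phi>(t) X) P = q exp(tY) P
   says that exp(-\<phi>(t) X) q exp(tY) is upper triangular.  Its first column puts the first column of
   q exp(tY), which is quadratic in t, on the conic 2 v0 v2 - 2x v0 v1 - v1^2 = 0 traced by exp(uX) e1;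
   comparing coefficients forces \<phi> to be a Moebius transformation \<sigma> t / (n1 + n2 t).  Its last row,
   the plane of the flag, then forces n2 = 0, so \<phi> is linear.  Since t / (1 - t) is not linear, the
   curve admits no projective reparameterisation. *)

section \<open>Coordinates on 3 by 3 matrices\<close>

lemma less_numerals_3: "(0::3) < 1" "(1::3) < 2" "(0::3) < 2"
  by (simp_all add: less_bit1_def bit1.Rep_0 bit1.Rep_1 bit1.Rep_numeral)

lemma three_eq_0: "(3::3) = 0"
  by simp

lemma forall_3_from_0: "(\<forall>i::3. P i) \<longleftrightarrow> P 0 \<and> P 1 \<and> P 2"
  using forall_3[of P] unfolding three_eq_0 by blast

lemma sum_3_from_0: "sum f (UNIV::3 set) = f 0 + f 1 + f 2"
  using sum_3[of f] unfolding three_eq_0 by (simp add: ac_simps)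

definition M3 :: "real \<Rightarrow> real \<Rightarrow> real \<Rightarrow> real \<Rightarrow> real \<Rightarrow> real \<Rightarrow> real \<Rightarrow> real \<Rightarrow> real \<Rightarrow> mat3" where
  "M3 a b c d e f g h k = (\<chi> i j. if i = 0 then (if j = 0 then a else if j = 1 then b else c)
      else if i = 1 then (if j = 0 then d else if j = 1 then e else f)
      else (if j = 0 then g else if j = 1 then h else k))"

lemma M3_nth [simp]:
  "M3 a b c d e f g h k $ 0 $ 0 = a" "M3 a b c d e f g h k $ 0 $ 1 = b" "M3 a b c d e f g h k $ 0 $ 2 = c"
  "M3 a b c d e f g h k $ 1 $ 0 = d" "M3 a b c d e f g h k $ 1 $ 1 = e" "M3 a b c d e f g h k $ 1 $ 2 = f"
  "M3 a b c d e f g h k $ 2 $ 0 = g" "M3 a b c d e f g h k $ 2 $ 1 = h" "M3 a b c d e f g h k $ 2 $ 2 = k"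
  by (simp_all add: M3_def)

lemma mat3_eq_iff: "(A::mat3) = B \<longleftrightarrow> A$0$0 = B$0$0 \<and> A$0$1 = B$0$1 \<and> A$0$2 = B$0$2 \<and>
   A$1$0 = B$1$0 \<and> A$1$1 = B$1$1 \<and> A$1$2 = B$1$2 \<and> A$2$0 = B$2$0 \<and> A$2$1 = B$2$1 \<and> A$2$2 = B$2$2"
  by (auto simp: vec_eq_iff forall_3_from_0)

lemma M3_eta: "(A::mat3) = M3 (A$0$0) (A$0$1) (A$0$2) (A$1$0) (A$1$1) (A$1$2) (A$2$0) (A$2$1) (A$2$2)"
  by (simp add: mat3_eq_iff)

lemma M3_eq_iff: "M3 a b c d e f g h k = M3 a' b' c' d' e' f' g' h' k' \<longleftrightarrow>
   a = a' \<and> b = b' \<and> c = c' \<and> d = d' \<and> e = e' \<and> f = f' \<and> g = g' \<and> h = h' \<and> k = k'"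
  by (simp add: mat3_eq_iff)

lemma M3_mult: "M3 a b c d e f g h k ** M3 a' b' c' d' e' f' g' h' k' =
  M3 (a*a' + b*d' + c*g') (a*b' + b*e' + c*h') (a*c' + b*f' + c*k')
     (d*a' + e*d' + f*g') (d*b' + e*e' + f*h') (d*c' + e*f' + f*k')
     (g*a' + h*d' + k*g') (g*b' + h*e' + k*h') (g*c' + h*f' + k*k')"
  by (simp add: mat3_eq_iff matrix_matrix_mult_def sum_3_from_0)

lemma M3_add: "M3 a b c d e f g h k + M3 a' b' c' d' e' f' g' h' k' =
  M3 (a+a') (b+b') (c+c') (d+d') (e+e') (f+f') (g+g') (h+h') (k+k')"
  by (simp add: mat3_eq_iff)

lemma M3_scaleR: "r *\<^sub>R M3 a b c d e f g h k = M3 (r*a) (r*b) (r*c) (r*d) (r*e) (r*f) (r*g) (r*h) (r*k)"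
  by (simp add: mat3_eq_iff)

lemma mat1_eq_M3: "(mat 1 :: mat3) = M3 1 0 0 0 1 0 0 0 1"
  by (simp add: mat3_eq_iff mat_def)

lemma zero_eq_M3: "(0 :: mat3) = M3 0 0 0 0 0 0 0 0 0"
  by (simp add: mat3_eq_iff)

lemma E_eq_M3: "E 2 1 = M3 0 0 0 1 0 0 0 0 0" "E 3 2 = M3 0 0 0 0 0 0 0 1 0" "E 3 1 = M3 0 0 0 0 0 0 1 0 0"
  by (simp_all add: E_def mat3_eq_iff)

section \<open>The parabolic subgroup and its cosets\<close>

lemma Pb_iff: "A \<in> Pb \<longleftrightarrow> A$1$0 = 0 \<and> A$2$0 = 0 \<and> A$2$1 = 0 \<and> A$0$0 * A$1$1 * A$2$2 = 1"
proof -
  have "(\<forall>i j. j < i \<longrightarrow> A $ i $ j = 0) \<longleftrightarrow> A$1$0 = 0 \<and> A$2$0 = 0 \<and> A$2$1 = 0"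
    using less_numerals_3 by (auto simp: forall_3_from_0 not_less_iff_gr_or_eq)
  moreover have "det A = A$0$0*A$1$1*A$2$2 + A$0$1*A$1$2*A$2$0 + A$0$2*A$1$0*A$2$1
      - A$0$0*A$1$2*A$2$1 - A$0$1*A$1$0*A$2$2 - A$0$2*A$1$1*A$2$0"
    using det_3[of A] unfolding three_eq_0 by simp
  ultimately show ?thesis by (auto simp: Pb_def SL3_def)
qed

lemma M3_in_Pb_iff: "M3 a b c d e f g h k \<in> Pb \<longleftrightarrow> d = 0 \<and> g = 0 \<and> h = 0 \<and> a*e*k = 1"
  by (simp add: Pb_iff)

lemma nlow_iff: "Y \<in> nlow \<longleftrightarrow> (\<exists>a b c. Y = M3 0 0 0 a 0 0 b c 0)"
proof -
  have "Y \<in> nlow \<longleftrightarrow> Y$0$0 = 0 \<and> Y$0$1 = 0 \<and> Y$0$2 = 0 \<and> Y$1$1 = 0 \<and> Y$1$2 = 0 \<and> Y$2$2 = 0"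
    using less_numerals_3 by (auto simp: nlow_def forall_3_from_0 less_imp_le)
  then show ?thesis by (subst (1 2) M3_eta) (auto simp: M3_eq_iff simp del: M3_nth)
qed

lemma M3_in_nlow [simp]: "M3 0 0 0 a 0 0 b c 0 \<in> nlow"
  by (auto simp: nlow_iff)

lemma mexp_strictly_lower: "mexp (M3 0 0 0 a 0 0 b c 0) = M3 1 0 0 a 1 0 (b + a*c/2) c 1"
proof -
  let ?X = "M3 0 0 0 a 0 0 b c 0"
  have pow_Suc: "mpow ?X (Suc n) = ?X ** mpow ?X n" for n by (simp add: mpow_def)
  have pow_0: "mpow ?X 0 = mat 1" by (simp add: mpow_def)
  have nilpotent: "mpow ?X (m + 3) = 0" for m
  proof (induction m)
    case 0
    show ?case by (simp add: numeral_3_eq_3 pow_Suc pow_0 mat1_eq_M3 M3_mult zero_eq_M3)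
  next
    case (Suc m)
    then show ?case using pow_Suc[of "m + 3"] by simp
  qed
  have "(1 / fact n) *\<^sub>R mpow ?X n = 0" if "n \<notin> {0, 1, 2}" for n
  proof -
    have "n = (n - 3) + 3" using that by auto
    then show ?thesis using nilpotent[of "n - 3"] by (metis scaleR_zero_right)
  qed
  then have "mexp ?X = (\<Sum>n\<in>{0, 1, 2}. (1 / fact n) *\<^sub>R mpow ?X n)"
    unfolding mexp_def by (intro suminf_finite) auto
  also have "\<dots> = M3 1 0 0 a 1 0 (b + a*c/2) c 1"
    by (simp add: numeral_2_eq_2 pow_Suc pow_0 mat1_eq_M3 M3_mult M3_add M3_scaleR M3_eq_iff)
  finally show ?thesis .
qed

lemma mexp_zero: "mexp 0 = mat 1"
  by (simp add: zero_eq_M3 mexp_strictly_lower mat1_eq_M3)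

lemma mat1_in_Pb: "mat 1 \<in> Pb"
  by (simp add: mat1_eq_M3 M3_in_Pb_iff)

lemma Pb_mult: "A \<in> Pb \<Longrightarrow> B \<in> Pb \<Longrightarrow> A ** B \<in> Pb"
  by (subst (asm) (1 2) M3_eta, subst (1 2) M3_eta)
     (simp add: M3_mult M3_in_Pb_iff del: M3_nth, algebra)

lemma Pb_right_inverse: assumes "p \<in> Pb" shows "\<exists>p'\<in>Pb. p ** p' = mat 1"
proof -
  obtain a b c e f k where p: "p = M3 a b c 0 e f 0 0 k" and det: "a*e*k = 1"
    using assms M3_eta[of p] by (auto simp: Pb_iff)
  let ?p' = "M3 (e*k) (-b*k) (b*f - c*e) 0 (a*k) (-a*f) 0 0 (a*e)"
  have "?p' \<in> Pb" using det by (simp add: M3_in_Pb_iff algebra_simps)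
  moreover have "p ** ?p' = mat 1" using det
    by (simp add: p M3_mult mat1_eq_M3 M3_eq_iff algebra_simps)
  ultimately show ?thesis by blast
qed

lemma cosetP_mult_Pb: assumes "p \<in> Pb" shows "cosetP (g ** p) = cosetP g"
proof -
  have "(\<lambda>r. p ** r) ` Pb = Pb"
  proof
    show "(\<lambda>r. p ** r) ` Pb \<subseteq> Pb" using Pb_mult assms by auto
    show "Pb \<subseteq> (\<lambda>r. p ** r) ` Pb"
    proof
      fix r assume r: "r \<in> Pb"
      obtain p' where p': "p' \<in> Pb" "p ** p' = mat 1" using Pb_right_inverse assms by blast
      have "r = p ** (p' ** r)" by (simp add: matrix_mul_assoc p')
      then show "r \<in> (\<lambda>r. p ** r) ` Pb" using Pb_mult[OF p'(1) r] by blast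
    qed
  qed
  moreover have "cosetP (g ** p) = (\<lambda>r. g ** r) ` ((\<lambda>r. p ** r) ` Pb)"
    unfolding cosetP_def image_image by (simp add: matrix_mul_assoc)
  ultimately show ?thesis by (simp add: cosetP_def)
qed

lemma cosetP_eq_imp_mult_in_Pb:
  assumes "cosetP g = cosetP h" and "g' ** g = mat 1"
  shows "g' ** h \<in> Pb"
proof -
  have "h \<in> cosetP h" unfolding cosetP_def using mat1_in_Pb by force
  then have "h \<in> cosetP g" using assms(1) by simp
  then obtain p where "p \<in> Pb" "h = g ** p" unfolding cosetP_def by blast
  then show ?thesis using assms(2) by (simp add: matrix_mul_assoc)
qed

section \<open>Curves with a projective reparameterisation\<close>

lemma eventually_nhds_0_real_iff: "(\<forall>\<^sub>F t in nhds (0::real). P t) \<longleftrightarrow> (\<exists>\<epsilon>>0. \<forall>t. \<bar>t\<bar> < \<epsilon> \<longrightarrow> P t)"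
  by (auto simp: eventually_nhds_metric dist_real_def)

lemma eventually_nhds_0_abs_less: "\<epsilon> > 0 \<Longrightarrow> \<forall>\<^sub>F t in nhds (0::real). \<bar>t\<bar> < \<epsilon>"
  unfolding eventually_nhds_0_real_iff by auto

(* v stands for 1 / (1 + t), which keeps the factorisations below polynomial. *)
lemma admits_proj_reparamI:
  assumes "q \<in> Pb" and "Y \<in> nlow"
    and "\<And>t v. v * (1 + t) = 1 \<Longrightarrow> P t v \<in> Pb"
    and "\<And>t v. v * (1 + t) = 1 \<Longrightarrow> mexp (t *\<^sub>R X) = q ** mexp ((t * v) *\<^sub>R Y) ** P t v"
  shows "admits_proj_reparam (mat 1) X"
proof -
  have "\<forall>\<^sub>F t in nhds 0. cosetP (mat 1 ** mexp (t *\<^sub>R X)) = cosetP (q ** mexp ((t / (t + 1)) *\<^sub>R Y))"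
  proof (rule eventually_mono[OF eventually_nhds_0_abs_less[of 1]])
    fix t :: real assume "\<bar>t\<bar> < 1"
    then have "(1 / (1 + t)) * (1 + t) = 1" "t / (t + 1) = t * (1 / (1 + t))"
      by (simp_all add: field_simps)
    then show "cosetP (mat 1 ** mexp (t *\<^sub>R X)) = cosetP (q ** mexp ((t / (t + 1)) *\<^sub>R Y))"
      using assms(3,4) cosetP_mult_Pb by (metis matrix_mul_lid)
  qed simp
  then show ?thesis unfolding admits_proj_reparam_def using assms(1,2) by blast
qed

lemma admits_E21: "admits_proj_reparam (mat 1) (E 2 1)"
  unfolding E_eq_M3
  by (rule admits_proj_reparamI[where q = "M3 1 (-1) 0 0 1 0 0 0 1" and Y = "M3 0 0 0 1 0 0 0 0 0"
        and P = "\<lambda>t v. M3 (1+t) 1 0 0 v 0 0 0 1"])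
     (simp_all add: M3_in_Pb_iff M3_scaleR mexp_strictly_lower M3_mult M3_eq_iff, (intro conjI | algebra)+)

lemma admits_E32: "admits_proj_reparam (mat 1) (E 3 2)"
  unfolding E_eq_M3
  by (rule admits_proj_reparamI[where q = "M3 1 0 0 0 1 (-1) 0 0 1" and Y = "M3 0 0 0 0 0 0 0 1 0"
        and P = "\<lambda>t v. M3 1 0 0 0 (1+t) 1 0 0 v"])
     (simp_all add: M3_in_Pb_iff M3_scaleR mexp_strictly_lower M3_mult M3_eq_iff, (intro conjI | algebra)+)

lemma admits_E31: "admits_proj_reparam (mat 1) (E 3 1)"
  unfolding E_eq_M3
  by (rule admits_proj_reparamI[where q = "M3 1 0 (-1) 0 1 0 0 0 1" and Y = "M3 0 0 0 0 0 0 1 0 0"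
        and P = "\<lambda>t v. M3 (1+t) 0 1 0 1 0 0 0 v"])
     (simp_all add: M3_in_Pb_iff M3_scaleR mexp_strictly_lower M3_mult M3_eq_iff, (intro conjI | algebra)+)

lemma admits_E21_E31: "admits_proj_reparam (mat 1) (E 2 1 + E 3 1)"
  unfolding E_eq_M3 M3_add
  by (rule admits_proj_reparamI[where q = "M3 1 0 (-1) 0 1 1 0 0 1" and Y = "M3 0 0 0 0 0 0 1 0 0"
        and P = "\<lambda>t v. M3 (1+t) 0 1 0 1 (-1) 0 0 v"])
     (simp_all add: M3_in_Pb_iff M3_scaleR mexp_strictly_lower M3_mult M3_eq_iff, (intro conjI | algebra)+)

lemma admits_E31_E32: "admits_proj_reparam (mat 1) (E 3 1 + E 3 2)"
  unfolding E_eq_M3 M3_add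
  by (rule admits_proj_reparamI[where q = "M3 1 (-1) (-1) 0 1 0 0 0 1" and Y = "M3 0 0 0 0 0 0 1 0 0"
        and P = "\<lambda>t v. M3 (1+t) (1+t) 1 0 1 0 0 0 v"])
     (simp_all add: M3_in_Pb_iff M3_scaleR mexp_strictly_lower M3_mult M3_eq_iff, (intro conjI | algebra)+)

lemma admits_E21_E32: "admits_proj_reparam (mat 1) (E 2 1 + E 3 2)"
  unfolding E_eq_M3 M3_add
  by (rule admits_proj_reparamI[where q = "M3 1 (-2) 2 0 1 (-2) 0 0 1" and Y = "M3 0 0 0 1 0 0 0 1 0"
        and P = "\<lambda>t v. M3 ((1+t)*(1+t)) (2*(1+t)) 2 0 1 (2 * v) 0 0 (v * v)"])
     (simp_all add: M3_in_Pb_iff M3_scaleR mexp_strictly_lower M3_mult M3_eq_iff, (intro conjI | algebra)+)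

section \<open>Rigidity of the curves exp(t(E21 + x E31 + E32))P\<close>

lemma poly_eq_0_if_vanishes_near_0:
  fixes p :: "real poly"
  assumes "\<epsilon> > 0" and "\<And>t. \<bar>t\<bar> < \<epsilon> \<Longrightarrow> poly p t = 0"
  shows "p = 0"
proof (rule ccontr)
  assume "p \<noteq> 0"
  then have "finite {t. poly p t = 0}" by (rule poly_roots_finite)
  moreover have "{-\<epsilon><..<\<epsilon>} \<subseteq> {t. poly p t = 0}" using assms(2) by auto
  ultimately have "finite {-\<epsilon><..<\<epsilon>}" by (rule finite_subset[rotated])
  then show False using assms(1) infinite_Ioo[of "-\<epsilon>" \<epsilon>] by simp
qed

lemma quartic_vanishing_near_0:
  fixes c0 c1 c2 c3 c4 :: real
  assumes "\<epsilon> > 0" and "\<And>t. \<bar>t\<bar> < \<epsilon> \<Longrightarrow> c0 + c1*t + c2*t^2 + c3*t^3 + c4*t^4 = 0"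
  shows "c0 = 0 \<and> c1 = 0 \<and> c2 = 0 \<and> c3 = 0 \<and> c4 = 0"
proof -
  have "poly [:c0, c1, c2, c3, c4:] t = c0 + c1*t + c2*t^2 + c3*t^3 + c4*t^4" for t
    by (simp add: algebra_simps power_numeral_reduce)
  then have "[:c0, c1, c2, c3, c4:] = 0"
    using poly_eq_0_if_vanishes_near_0[OF assms(1)] assms(2) by metis
  then show ?thesis by simp
qed

(* The hypotheses put (D, N, r B) on the conic 2 v0 v2 - 2x v0 v1 - v1^2 = 0; comparing coefficients
   gives (N1 + N2 t)^2 = \<sigma> D(t). *)
lemma conic_reparam_moebius:
  fixes x r D0 D1 D2 N1 N2 B1 B2 :: real and u :: "real \<Rightarrow> real"
  defines "\<sigma> \<equiv> 2*(r*B2 - x*N2)"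
  assumes "\<epsilon> > 0" and "D0 \<noteq> 0"
    and D: "\<And>t. \<bar>t\<bar> < \<epsilon> \<Longrightarrow> D0 + D1*t + D2*t^2 \<noteq> 0"
    and N: "\<And>t. \<bar>t\<bar> < \<epsilon> \<Longrightarrow> u t * (D0 + D1*t + D2*t^2) = N1*t + N2*t^2"
    and B: "\<And>t. \<bar>t\<bar> < \<epsilon> \<Longrightarrow> ((u t)^2/2 + x * u t) * (D0 + D1*t + D2*t^2) = r*(B1*t + B2*t^2)"
  shows "x*N1 = r*B1" and "N1^2 = \<sigma>*D0" and "\<And>t. \<bar>t\<bar> < \<epsilon> \<Longrightarrow> u t * (N1 + N2*t) = \<sigma>*t"
proof -
  define p0 where "p0 = 2*D0*(x*N1 - r*B1)"
  define p1 where "p1 = N1^2 + 2*x*(N1*D1 + N2*D0) - 2*r*(B1*D1 + B2*D0)"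
  define p2 where "p2 = 2*N1*N2 + 2*x*(N1*D2 + N2*D1) - 2*r*(B1*D2 + B2*D1)"
  define p3 where "p3 = N2^2 + 2*x*N2*D2 - 2*r*B2*D2"
  have "0 + p0*t + p1*t^2 + p2*t^3 + p3*t^4 = 0" if t: "\<bar>t\<bar> < \<epsilon>" for t
  proof -
    let ?D = "D0 + D1*t + D2*t^2" and ?N = "N1*t + N2*t^2"
    have "?N^2 + 2*x*?N*?D - 2*r*(B1*t + B2*t^2)*?D = 0"
      using N[OF t] B[OF t] by algebra
    then show ?thesis unfolding p0_def p1_def p2_def p3_def by algebra
  qed
  then have p: "p0 = 0" "p1 = 0" "p2 = 0" "p3 = 0"
    using quartic_vanishing_near_0[OF \<open>\<epsilon> > 0\<close>] by blast+
  show x: "x*N1 = r*B1" using p(1) \<open>D0 \<noteq> 0\<close> by (simp add: p0_def)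
  show "N1^2 = \<sigma>*D0" using p(2) x unfolding p1_def \<sigma>_def by algebra
  have sq: "(N1 + N2*t)^2 = \<sigma>*(D0 + D1*t + D2*t^2)" for t
    using p x unfolding p1_def p2_def p3_def \<sigma>_def by algebra
  fix t assume t: "\<bar>t\<bar> < \<epsilon>"
  let ?W = "N1 + N2*t"
  have "u t * ?W^2 = \<sigma>*t*?W" using N[OF t] unfolding sq by algebra
  then have "?W * (u t * ?W - \<sigma>*t) = 0" by algebra
  moreover have "?W = 0 \<Longrightarrow> \<sigma> = 0" using sq[of t] D[OF t] by simp
  ultimately show "u t * ?W = \<sigma>*t" by auto
qed

(* Multiplied by (n1 + n2 t)^2, the plane equation becomes a quartic in t whose three top
   coefficients force n2 = 0. *)
lemma plane_reparam_affine:
  fixes x q11 q13 q23 q33 b k n1 n2 :: real and u :: "real \<Rightarrow> real"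
  assumes \<sigma>: "\<sigma> = 2*(q33*k - x*n2)"
    and "\<epsilon> > 0" and "x \<noteq> 0" and "q11 \<noteq> 0" and "\<sigma> \<noteq> 0" and "k \<noteq> 0" and n1: "n1^2 = \<sigma>*q11"
    and W: "\<And>t. \<bar>t\<bar> < \<epsilon> \<Longrightarrow> u t * (n1 + n2*t) = \<sigma>*t"
    and plane: "\<And>t. \<bar>t\<bar> < \<epsilon> \<Longrightarrow>
      q11*((u t)^2/2 - x * u t) + (b*t - k*t^2)*(q13*((u t)^2/2 - x * u t) - q23 * u t + q33) = 0"
  shows "n2 = 0"
proof -
  define h0 where "h0 = q33*n1^2"
  define h1 where "h1 = -x*\<sigma>*q13*n1 - q23*\<sigma>*n1 + 2*q33*n1*n2"
  define h2 where "h2 = q13*\<sigma>^2/2 - x*\<sigma>*q13*n2 - q23*\<sigma>*n2 + q33*n2^2"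
  define g0 where "g0 = -x*\<sigma>*q11*n1 + b*h0"
  define g1 where "g1 = q11*\<sigma>^2/2 - x*\<sigma>*q11*n2 + b*h1 - k*h0"
  define g2 where "g2 = b*h2 - k*h1"
  define g3 where "g3 = -k*h2"
  have "0 + g0*t + g1*t^2 + g2*t^3 + g3*t^4 = 0" if t: "\<bar>t\<bar> < \<epsilon>" for t
    using W[OF t] plane[OF t]
    unfolding g0_def g1_def g2_def g3_def h0_def h1_def h2_def by algebra
  then have g: "g1 = 0" "g2 = 0" "g3 = 0"
    using quartic_vanishing_near_0[OF \<open>\<epsilon> > 0\<close>] by blast+
  have "h2 = 0" using g(3) \<open>k \<noteq> 0\<close> by (simp add: g3_def)
  then have "h1 = 0" using g(2) \<open>k \<noteq> 0\<close> by (simp add: g2_def)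
  then have "q11*\<sigma>*(-2*x*n2) = 0" using g(1) n1 \<sigma> unfolding g1_def h0_def by algebra
  then show "n2 = 0" using \<open>q11 \<noteq> 0\<close> \<open>\<sigma> \<noteq> 0\<close> \<open>x \<noteq> 0\<close> by simp
qed

(* The matrix exp(-uX) q exp(tY) lies in P; the conclusions come from its entries (1,1), (2,1), (3,1)
   and (3,2). *)
lemma coset_equations_E21_xE31_E32:
  fixes x u t a b c k q11 q12 q13 q22 q23 q33 :: real
  defines "D \<equiv> q11 + q12*a*t + q13*(b*t + k*t^2)" and "N \<equiv> q22*a*t + q23*(b*t + k*t^2)"
    and "m \<equiv> u^2/2 - x*u" and "w \<equiv> q13*(u^2/2 - x*u) - q23*u + q33"
  assumes k: "2*k = a*c"
    and coset: "cosetP (mexp (u *\<^sub>R M3 0 0 0 1 0 0 x 1 0))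
      = cosetP (M3 q11 q12 q13 0 q22 q23 0 0 q33 ** mexp (t *\<^sub>R M3 0 0 0 a 0 0 b c 0))"
  shows "D \<noteq> 0" and "u*D = N" and "(u^2/2 + x*u)*D = q33*(b*t + k*t^2)"
    and "q11*(u^2/2 - x*u) + (b*t - k*t^2)*w = 0" and "q12*(u^2/2 - x*u) - q22*u + c*t*w = 0"
proof -
  let ?g' = "M3 1 0 0 (-u) 1 0 m (-u) 1"
  let ?q = "M3 q11 q12 q13 0 q22 q23 0 0 q33"
  have "?g' ** mexp (u *\<^sub>R M3 0 0 0 1 0 0 x 1 0) = mat 1"
    by (simp add: m_def M3_scaleR mexp_strictly_lower M3_mult mat1_eq_M3 M3_eq_iff power2_eq_square)
  then have "?g' ** (?q ** mexp (t *\<^sub>R M3 0 0 0 a 0 0 b c 0)) \<in> Pb"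
    by (rule cosetP_eq_imp_mult_in_Pb[OF coset])
  moreover have "mexp (t *\<^sub>R M3 0 0 0 a 0 0 b c 0) = M3 1 0 0 (a*t) 1 0 (b*t + k*t^2) (c*t) 1"
    using k by (simp add: M3_scaleR mexp_strictly_lower M3_eq_iff power2_eq_square)
  moreover have "?g' ** ?q = M3 q11 q12 q13 (-u*q11) (q22 - u*q12) (q23 - u*q13) (m*q11) (m*q12 - u*q22) w"
    by (simp add: M3_mult M3_eq_iff m_def w_def)
  ultimately have "M3 q11 q12 q13 (-u*q11) (q22 - u*q12) (q23 - u*q13) (m*q11) (m*q12 - u*q22) w
      ** M3 1 0 0 (a*t) 1 0 (b*t + k*t^2) (c*t) 1 \<in> Pb"
    by (simp add: matrix_mul_assoc)
  then have M11: "D * (q22 - u*q12 + (q23 - u*q13)*(c*t)) * w = 1"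
    and M21: "-u*q11 + (q22 - u*q12)*(a*t) + (q23 - u*q13)*(b*t + k*t^2) = 0"
    and M31: "m*q11 + (m*q12 - u*q22)*(a*t) + w*(b*t + k*t^2) = 0"
    and M32: "m*q12 - u*q22 + w*(c*t) = 0"
    by (simp_all add: M3_mult M3_in_Pb_iff D_def mult.assoc)
  show "D \<noteq> 0" using M11 by auto
  show N: "u*D = N" using M21 unfolding D_def N_def by algebra
  show "q12*(u^2/2 - x*u) - q22*u + c*t*w = 0" using M32 unfolding m_def by (simp add: algebra_simps)
  have "w = q13*m - q23*u + q33" unfolding w_def m_def ..
  then have M31': "m*D - u*N + q33*(b*t + k*t^2) = 0"
    using M31 unfolding D_def N_def by algebra
  have "(u^2/2 + x*u)*D = u*(u*D) - m*D"
    unfolding m_def by (simp add: field_simps power2_eq_square)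
  also have "\<dots> = q33*(b*t + k*t^2)" using M31' N by simp
  finally show "(u^2/2 + x*u)*D = q33*(b*t + k*t^2)" .
  have "q11*m + (b*t - k*t^2)*w = (m*q11 + (m*q12 - u*q22)*(a*t) + w*(b*t + k*t^2))
      - a*t*(m*q12 - u*q22 + w*(c*t)) + (a*c - 2*k)*t^2*w"
    by algebra
  also have "\<dots> = 0" unfolding M31 M32 using k by simp
  finally show "q11*(u^2/2 - x*u) + (b*t - k*t^2)*w = 0" unfolding m_def .
qed

lemma reparam_linear_E21_xE31_E32:
  fixes x a b c q11 q12 q13 q22 q23 q33 :: real and \<phi> :: "real \<Rightarrow> real"
  assumes "x \<noteq> 0" and "\<epsilon> > 0" and "q11*q22*q33 = 1" and "\<not> (a = 0 \<and> b = 0 \<and> c = 0)"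
    and coset: "\<And>t. \<bar>t\<bar> < \<epsilon> \<Longrightarrow> cosetP (mexp (\<phi> t *\<^sub>R M3 0 0 0 1 0 0 x 1 0))
      = cosetP (M3 q11 q12 q13 0 q22 q23 0 0 q33 ** mexp (t *\<^sub>R M3 0 0 0 a 0 0 b c 0))"
  shows "\<exists>l. l \<noteq> 0 \<and> (\<forall>t. \<bar>t\<bar> < \<epsilon> \<longrightarrow> \<phi> t = l * t)"
proof -
  have "q11 \<noteq> 0" "q22 \<noteq> 0" "q33 \<noteq> 0" using \<open>q11*q22*q33 = 1\<close> by auto
  define k where "k = a*c/2"
  then have k: "2*k = a*c" by simp
  note eqs = coset_equations_E21_xE31_E32[OF k coset]
  have quadratics: "q11 + q12*a*t + q13*(b*t + k*t^2) = q11 + (q12*a + q13*b)*t + (q13*k)*t^2"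
    "q22*a*t + q23*(b*t + k*t^2) = (q22*a + q23*b)*t + (q23*k)*t^2" for t
    by algebra+
  have D: "q11 + (q12*a + q13*b)*t + (q13*k)*t^2 \<noteq> 0"
    and N: "\<phi> t * (q11 + (q12*a + q13*b)*t + (q13*k)*t^2) = (q22*a + q23*b)*t + (q23*k)*t^2"
    and B: "((\<phi> t)^2/2 + x * \<phi> t) * (q11 + (q12*a + q13*b)*t + (q13*k)*t^2) = q33*(b*t + k*t^2)"
    if "\<bar>t\<bar> < \<epsilon>" for t
    using eqs(1-3)[OF that] unfolding quadratics by auto
  define n1 where "n1 = q22*a + q23*b"
  define \<sigma> where "\<sigma> = 2*(q33*k - x*(q23*k))"
  have moebius: "x*n1 = q33*b" "n1^2 = \<sigma>*q11" "\<And>t. \<bar>t\<bar> < \<epsilon> \<Longrightarrow> \<phi> t * (n1 + q23*k*t) = \<sigma>*t"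
    unfolding n1_def \<sigma>_def
    by (rule conic_reparam_moebius[OF \<open>\<epsilon> > 0\<close> \<open>q11 \<noteq> 0\<close> D N B]; assumption)+
  have "n1 \<noteq> 0"
  proof
    assume "n1 = 0"
    then have "b = 0" "a = 0" using moebius(1) \<open>x \<noteq> 0\<close> \<open>q22 \<noteq> 0\<close> \<open>q33 \<noteq> 0\<close> by (auto simp: n1_def)
    define t where "t = \<epsilon>/2"
    have t: "\<bar>t\<bar> < \<epsilon>" "t \<noteq> 0" using \<open>\<epsilon> > 0\<close> by (auto simp: t_def)
    have "\<phi> t = 0" using eqs(2)[OF t(1)] \<open>a = 0\<close> \<open>b = 0\<close> \<open>q11 \<noteq> 0\<close> by (simp add: k_def)
    then have "c = 0" using eqs(5)[OF t(1)] t(2) \<open>q33 \<noteq> 0\<close> by simp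
    then show False using assms(4) \<open>a = 0\<close> \<open>b = 0\<close> by simp
  qed
  then have "\<sigma> \<noteq> 0" using moebius(2) by auto
  have "q23*k = 0"
  proof (cases "k = 0")
    case False
    show ?thesis
      by (rule plane_reparam_affine[OF \<sigma>_def \<open>\<epsilon> > 0\<close> \<open>x \<noteq> 0\<close> \<open>q11 \<noteq> 0\<close> \<open>\<sigma> \<noteq> 0\<close> False
            moebius(2)]) (fact moebius(3), fact eqs(4))
  qed simp
  then have "\<phi> t * n1 = \<sigma> * t" if "\<bar>t\<bar> < \<epsilon>" for t
    using moebius(3)[OF that] by auto
  then have "\<phi> t = \<sigma> / n1 * t" if "\<bar>t\<bar> < \<epsilon>" for t
    using that \<open>n1 \<noteq> 0\<close> by (simp add: field_simps)
  then show ?thesis using \<open>n1 \<noteq> 0\<close> \<open>\<sigma> \<noteq> 0\<close> by (intro exI[of _ "\<sigma> / n1"]) simp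
qed

lemma only_affine_reparams_E21_xE31_E32:
  fixes x :: real
  assumes "x \<noteq> 0"
  shows "only_affine_reparams (mat 1) (E 2 1 + x *\<^sub>R E 3 1 + E 3 2)"
  unfolding only_affine_reparams_def
proof (intro allI impI)
  fix \<phi> :: "real \<Rightarrow> real"
  assume "\<exists>q\<in>Pb. \<exists>Y\<in>nlow. Y \<noteq> 0 \<and> (\<forall>\<^sub>F t in nhds 0.
    cosetP (mat 1 ** mexp (\<phi> t *\<^sub>R (E 2 1 + x *\<^sub>R E 3 1 + E 3 2))) = cosetP (q ** mexp (t *\<^sub>R Y)))"
  then obtain q Y \<epsilon> where "q \<in> Pb" "Y \<in> nlow" "Y \<noteq> 0" "\<epsilon> > 0" and coset: "\<And>t. \<bar>t\<bar> < \<epsilon> \<Longrightarrow>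
    cosetP (mat 1 ** mexp (\<phi> t *\<^sub>R (E 2 1 + x *\<^sub>R E 3 1 + E 3 2))) = cosetP (q ** mexp (t *\<^sub>R Y))"
    unfolding eventually_nhds_0_real_iff by blast
  obtain q11 q12 q13 q22 q23 q33 where q: "q = M3 q11 q12 q13 0 q22 q23 0 0 q33" and "q11*q22*q33 = 1"
    using \<open>q \<in> Pb\<close> M3_eta[of q] by (auto simp: Pb_iff)
  obtain a b c where Y: "Y = M3 0 0 0 a 0 0 b c 0" using \<open>Y \<in> nlow\<close> by (auto simp: nlow_iff)
  have "\<not> (a = 0 \<and> b = 0 \<and> c = 0)" using \<open>Y \<noteq> 0\<close> by (auto simp: Y zero_eq_M3)
  moreover have X: "E 2 1 + x *\<^sub>R E 3 1 + E 3 2 = M3 0 0 0 1 0 0 x 1 0"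
    unfolding E_eq_M3 M3_add M3_scaleR by simp
  ultimately obtain l where "l \<noteq> 0" "\<forall>t. \<bar>t\<bar> < \<epsilon> \<longrightarrow> \<phi> t = l * t"
    using reparam_linear_E21_xE31_E32[OF \<open>x \<noteq> 0\<close> \<open>\<epsilon> > 0\<close> \<open>q11*q22*q33 = 1\<close>]
      coset[unfolded q Y X matrix_mul_lid] by blast
  then show "\<exists>l. l \<noteq> 0 \<and> (\<forall>\<^sub>F t in nhds 0. \<phi> t = l * t)"
    unfolding eventually_nhds_0_real_iff using \<open>\<epsilon> > 0\<close> by blast
qed

lemma moebius_not_eventually_linear: "\<not> (\<forall>\<^sub>F s in nhds (0::real). s / (1 - s) = a * s)"
proof
  assume "\<forall>\<^sub>F s in nhds (0::real). s / (1 - s) = a * s"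
  then obtain \<epsilon> :: real where "\<epsilon> > 0" and lin: "\<And>s. \<bar>s\<bar> < \<epsilon> \<Longrightarrow> s / (1 - s) = a * s"
    unfolding eventually_nhds_0_real_iff by blast
  have one: "1 = a * (1 - s)" if "0 < s" "s < min \<epsilon> 1" for s
  proof -
    have "s = a * s * (1 - s)" using lin[of s] that by (simp add: field_simps)
    then have "s * (1 - a * (1 - s)) = 0" by algebra
    then show ?thesis using that by simp
  qed
  define s where "s = min \<epsilon> 1 / 2"
  have "0 < s" "s < min \<epsilon> 1" using \<open>\<epsilon> > 0\<close> by (auto simp: s_def)
  then have "1 = a * (1 - s)" "1 = a * (1 - s/2)" using one[of s] one[of "s/2"] by auto
  then have "a * s = 0" by algebra
  then show False using \<open>1 = a * (1 - s)\<close> \<open>0 < s\<close> by simp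
qed

lemma admits_proj_reparam_inverse:
  assumes "admits_proj_reparam (mat 1) X"
  obtains q Y where "q \<in> Pb" "Y \<in> nlow"
    and "\<forall>\<^sub>F s in nhds 0. cosetP (mat 1 ** mexp ((s / (1 - s)) *\<^sub>R X)) = cosetP (q ** mexp (s *\<^sub>R Y))"
proof -
  obtain q Y where "q \<in> Pb" "Y \<in> nlow" and ev: "\<forall>\<^sub>F t in nhds 0.
      cosetP (mat 1 ** mexp (t *\<^sub>R X)) = cosetP (q ** mexp ((t / (t + 1)) *\<^sub>R Y))"
    using assms unfolding admits_proj_reparam_def by blast
  define \<psi> :: "real \<Rightarrow> real" where "\<psi> = (\<lambda>s. s / (1 - s))"
  have \<psi>_inverse: "\<psi> s / (\<psi> s + 1) = s" if "\<bar>s\<bar> < 1" for s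
    using that unfolding \<psi>_def by (simp add: field_simps abs_less_iff)
  have "((\<lambda>s. s / (1 - s)) \<longlongrightarrow> 0 / (1 - 0)) (nhds (0::real))"
    by (intro tendsto_divide tendsto_diff filterlim_ident tendsto_const) simp
  then have "filterlim \<psi> (nhds 0) (nhds 0)"
    by (simp add: \<psi>_def)
  then have "\<forall>\<^sub>F s in nhds 0.
      cosetP (mat 1 ** mexp (\<psi> s *\<^sub>R X)) = cosetP (q ** mexp ((\<psi> s / (\<psi> s + 1)) *\<^sub>R Y))"
    by (rule eventually_compose_filterlim[OF ev])
  moreover have "\<forall>\<^sub>F s in nhds 0. \<bar>s\<bar> < (1::real)"
    by (rule eventually_nhds_0_abs_less) simp
  ultimately have "\<forall>\<^sub>F s in nhds 0. cosetP (mat 1 ** mexp (\<psi> s *\<^sub>R X)) = cosetP (q ** mexp (s *\<^sub>R Y))"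
    by eventually_elim (metis \<psi>_inverse)
  then show thesis using that \<open>q \<in> Pb\<close> \<open>Y \<in> nlow\<close> unfolding \<psi>_def by blast
qed

lemma not_admits_proj_reparam_if_only_affine:
  assumes affine: "only_affine_reparams (mat 1) X"
    and leaves: "\<And>t. t \<noteq> 0 \<Longrightarrow> mexp (t *\<^sub>R X) \<notin> Pb"
  shows "\<not> admits_proj_reparam (mat 1) X"
proof
  assume "admits_proj_reparam (mat 1) X"
  then obtain q Y where "q \<in> Pb" "Y \<in> nlow" and ev: "\<forall>\<^sub>F s in nhds 0.
      cosetP (mat 1 ** mexp ((s / (1 - s)) *\<^sub>R X)) = cosetP (q ** mexp (s *\<^sub>R Y))"
    by (rule admits_proj_reparam_inverse)
  show False
  proof (cases "Y = 0")
    case True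
    obtain \<epsilon> :: real where "\<epsilon> > 0" and coset: "\<And>s. \<bar>s\<bar> < \<epsilon> \<Longrightarrow>
        cosetP (mat 1 ** mexp ((s / (1 - s)) *\<^sub>R X)) = cosetP (q ** mexp (s *\<^sub>R Y))"
      using ev unfolding eventually_nhds_0_real_iff by blast
    define s where "s = min \<epsilon> 1 / 2"
    have s: "\<bar>s\<bar> < \<epsilon>" "0 < s" "s < 1" using \<open>\<epsilon> > 0\<close> by (auto simp: s_def)
    then have "cosetP (mexp ((s / (1 - s)) *\<^sub>R X)) = cosetP (mat 1)"
      using coset[of s] cosetP_mult_Pb[OF \<open>q \<in> Pb\<close>, of "mat 1"] \<open>Y = 0\<close> by (simp add: mexp_zero)
    then have "mexp ((s / (1 - s)) *\<^sub>R X) \<in> Pb"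
      using cosetP_eq_imp_mult_in_Pb[of "mat 1" _ "mat 1"] by simp
    moreover have "s / (1 - s) \<noteq> 0" using s by simp
    ultimately show False using leaves by blast
  next
    case False
    then have "\<exists>q\<in>Pb. \<exists>Y\<in>nlow. Y \<noteq> 0 \<and> (\<forall>\<^sub>F s in nhds 0.
        cosetP (mat 1 ** mexp ((s / (1 - s)) *\<^sub>R X)) = cosetP (q ** mexp (s *\<^sub>R Y)))"
      using ev \<open>q \<in> Pb\<close> \<open>Y \<in> nlow\<close> by blast
    then have "\<exists>a. a \<noteq> 0 \<and> (\<forall>\<^sub>F s in nhds (0::real). s / (1 - s) = a * s)"
      using affine[unfolded only_affine_reparams_def, rule_format, of "\<lambda>s. s / (1 - s)"] by simp
    then show False using moebius_not_eventually_linear by blast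
  qed
qed

theorem mainTheorem5:
  shows "admits_proj_reparam (mat 1) (E 2 1)
       \<and> admits_proj_reparam (mat 1) (E 3 2)
       \<and> admits_proj_reparam (mat 1) (E 2 1 + E 3 2)
       \<and> admits_proj_reparam (mat 1) (E 2 1 + E 3 1)
       \<and> admits_proj_reparam (mat 1) (E 3 1 + E 3 2)
       \<and> admits_proj_reparam (mat 1) (E 3 1)
       \<and> (\<forall>x::real. x \<noteq> 0 \<longrightarrow>
            \<not> admits_proj_reparam (mat 1) (E 2 1 + x *\<^sub>R E 3 1 + E 3 2)
            \<and> only_affine_reparams (mat 1) (E 2 1 + x *\<^sub>R E 3 1 + E 3 2))
       \<and> \<not> admits_proj_reparam (mat 1) (E 2 1 + E 3 1 + E 3 2)
       \<and> only_affine_reparams (mat 1) (E 2 1 + E 3 1 + E 3 2)"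
proof -
  have rigid: "\<not> admits_proj_reparam (mat 1) (E 2 1 + x *\<^sub>R E 3 1 + E 3 2)
      \<and> only_affine_reparams (mat 1) (E 2 1 + x *\<^sub>R E 3 1 + E 3 2)" if "x \<noteq> 0" for x :: real
  proof -
    have "mexp (t *\<^sub>R (E 2 1 + x *\<^sub>R E 3 1 + E 3 2)) \<notin> Pb" if "t \<noteq> 0" for t
      using that unfolding E_eq_M3 M3_add M3_scaleR by (simp add: mexp_strictly_lower M3_in_Pb_iff)
    then show ?thesis
      using not_admits_proj_reparam_if_only_affine only_affine_reparams_E21_xE31_E32[OF that] by blast
  qed
  show ?thesis
    using admits_E21 admits_E32 admits_E21_E32 admits_E21_E31 admits_E31_E32 admits_E31
      rigid rigid[of 1] by simp
qed

end
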